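(* Let $a,b,G\in C^0(\mathbb{R})$ be even functions with $a,b>0$. Let $m>0$ and suppose $G(s)\ge G(m)$ for all $s\in\mathbb{R}$ and $G(s)>G(m)$ for all $s\in(-m,m)$. If there exists a sequence of bounded intervals $J_n\subset\mathbb{R}$ with $$\int_{J_n}\frac1a\to+\infty\quad\text{and}\quad \int_{J_n}b\to 0,$$ then there exists $L_0>0$ such that for every $L>L_0$ the functional $\mathcal{E}(\cdot,(-L,L))$ has no odd minimizers in $H^1_m((-L,L))$.
   Context: $H^1_m((-L,L)):=\{u\in H^1((-L,L)):u(-L)=-m,\ u(L)=m\}$ and $\mathcal{E}(u,(-L,L)):=\int_{-L}^L\{\tfrac12 (u')^2a(x)+G(u)b(x)\}\,dx$. A minimizer means an absolute minimizer of $\mathcal{E}(\cdot,(-L,L))$ over $H^1_m((-L,L))$. *)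

theory Defs
  imports "HOL-Analysis.Analysis"
begin

text \<open>One-dimensional Sobolev space H^1((-L,L)), identified (as usual) with the continuous
  representatives: u is an indefinite integral of a square-integrable function g on [-L,L]
  (g is the weak derivative of u).\<close>
definition H1 :: "real \<Rightarrow> (real \<Rightarrow> real) \<Rightarrow> bool" where
  "H1 L u \<longleftrightarrow> (\<exists>g. g \<in> borel_measurable lborel \<and>
      set_integrable lborel {-L..L} g \<and>
      set_integrable lborel {-L..L} (\<lambda>x. (g x)\<^sup>2) \<and>
      (\<forall>x\<in>{-L..L}. u x = u (-L) + (LBINT t=-L..x. g t)))"

definition H1m :: "real \<Rightarrow> real \<Rightarrow> (real \<Rightarrow> real) \<Rightarrow> bool" where
  "H1m m L u \<longleftrightarrow> H1 L u \<and> u (-L) = - m \<and> u L = m"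

text \<open>Energy; for u in H^1 the classical derivative exists a.e. and equals the weak one.\<close>
definition energy :: "(real \<Rightarrow> real) \<Rightarrow> (real \<Rightarrow> real) \<Rightarrow> (real \<Rightarrow> real) \<Rightarrow> real \<Rightarrow> (real \<Rightarrow> real) \<Rightarrow> real" where
  "energy a b G L u = (LBINT x=-L..L. (1/2) * (deriv u x)\<^sup>2 * a x + G (u x) * b x)"

definition is_minimizer :: "(real \<Rightarrow> real) \<Rightarrow> (real \<Rightarrow> real) \<Rightarrow> (real \<Rightarrow> real) \<Rightarrow> real \<Rightarrow> real \<Rightarrow> (real \<Rightarrow> real) \<Rightarrow> bool" where
  "is_minimizer a b G m L u \<longleftrightarrow> H1m m L u \<and>
     (\<forall>v. H1m m L v \<longrightarrow> energy a b G L u \<le> energy a b G L v)"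

definition odd_on :: "real \<Rightarrow> (real \<Rightarrow> real) \<Rightarrow> bool" where
  "odd_on L u \<longleftrightarrow> (\<forall>x\<in>{-L..L}. u (-x) = - u x)"

end

theory Submission
  imports Defs
begin

text \<open>
  An odd minimiser vanishes at the origin. As \<open>G > G(m)\<close> near \<open>0\<close>, every \<open>u\<close> with \<open>u(0) = 0\<close> pays a
  fixed amount \<open>\<delta> > 0\<close> above the ground level \<open>G(m) \<integral> b\<close> on \<open>[0, 1]\<close>: either \<open>u\<close> stays close to \<open>0\<close>
  there, or it climbs to \<open>\<plusminus>m/2\<close>, which costs Dirichlet energy by Cauchy--Schwarz. A competitor
  that jumps from \<open>-m\<close> to \<open>m\<close> inside an interval \<open>J\<close> with \<open>\<integral>\<^sub>J 1/a\<close> large and \<open>\<integral>\<^sub>J b\<close> small costs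
  only \<open>2m\<^sup>2 / \<integral>\<^sub>J 1/a + O(\<integral>\<^sub>J b) < \<delta>\<close> above that level, so for large \<open>L\<close> no odd function is minimal.

  The energy is defined through the classical derivative, so one needs that \<open>deriv u\<close> is measurable
  and agrees a.e. with the weak derivative of \<open>u \<in> H\<^sup>1\<close>; the latter is Lebesgue's differentiation
  theorem, a consequence of Vitali's covering theorem.
\<close>

section \<open>Measurability of the derivative\<close>

lemma ex_tendsto_at_if_Cauchy:
  fixes \<phi> :: "real \<Rightarrow> real"
  assumes C: "\<forall>e>0. \<exists>d>0. \<forall>h h'. h \<noteq> a \<longrightarrow> h' \<noteq> a \<longrightarrow> \<bar>h - a\<bar> < d \<longrightarrow> \<bar>h' - a\<bar> < d \<longrightarrow>
       \<bar>\<phi> h - \<phi> h'\<bar> \<le> e"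
  shows "\<exists>l. (\<phi> \<longlongrightarrow> l) (at a)"
proof -
  define s where "s j = \<phi> (a + 1 / (real j + 2))" for j
  have s_close: "\<exists>k. \<forall>j\<ge>k. \<forall>h. h \<noteq> a \<longrightarrow> \<bar>h - a\<bar> < 1 / (real k + 1) \<longrightarrow> \<bar>\<phi> h - s j\<bar> \<le> e"
    if "e > 0" for e
  proof -
    obtain d where "d > 0" and d: "\<And>h h'. h \<noteq> a \<Longrightarrow> h' \<noteq> a \<Longrightarrow> \<bar>h - a\<bar> < d \<Longrightarrow> \<bar>h' - a\<bar> < d \<Longrightarrow>
        \<bar>\<phi> h - \<phi> h'\<bar> \<le> e"
      using C \<open>e > 0\<close> by blast
    obtain k where k: "inverse (real (Suc k)) < d" using reals_Archimedean \<open>d > 0\<close> by blast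
    have "\<bar>\<phi> h - s j\<bar> \<le> e" if "j \<ge> k" "h \<noteq> a" "\<bar>h - a\<bar> < 1 / (real k + 1)" for j h
    proof -
      have "1 / (real j + 2) < 1 / (real k + 1)" using \<open>j \<ge> k\<close> by (simp add: field_simps)
      moreover have "1 / (real k + 1) < d" using k by (simp add: inverse_eq_divide add.commute)
      ultimately show ?thesis unfolding s_def using that by (intro d) auto
    qed
    then show ?thesis by blast
  qed
  have "Cauchy s"
  proof (rule metric_CauchyI)
    fix e :: real assume "e > 0"
    then obtain k where k: "\<And>j h. j \<ge> k \<Longrightarrow> h \<noteq> a \<Longrightarrow> \<bar>h - a\<bar> < 1 / (real k + 1) \<Longrightarrow> \<bar>\<phi> h - s j\<bar> \<le> e/2"
      using s_close[of "e/2"] by auto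
    have "dist (s i) (s j) < e" if "i \<ge> k" "j \<ge> k" for i j
    proof -
      have "1 / (real i + 2) < 1 / (real k + 1)" using \<open>i \<ge> k\<close> by (simp add: field_simps)
      then have "\<bar>s i - s j\<bar> \<le> e/2" using k[OF \<open>j \<ge> k\<close>, of "a + 1 / (real i + 2)"] by (simp add: s_def)
      then show ?thesis using \<open>e > 0\<close> by (simp add: dist_real_def)
    qed
    then show "\<exists>M. \<forall>i\<ge>M. \<forall>j\<ge>M. dist (s i) (s j) < e" by blast
  qed
  then obtain l where l: "s \<longlonglongrightarrow> l" using convergent_eq_Cauchy by blast
  have "(\<phi> \<longlongrightarrow> l) (at a)"
    unfolding LIM_eq
  proof (intro allI impI)
    fix e :: real assume "e > 0"
    then obtain k where k: "\<And>j h. j \<ge> k \<Longrightarrow> h \<noteq> a \<Longrightarrow> \<bar>h - a\<bar> < 1 / (real k + 1) \<Longrightarrow> \<bar>\<phi> h - s j\<bar> \<le> e/2"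
      using s_close[of "e/2"] by auto
    have "\<bar>\<phi> h - l\<bar> \<le> e/2" if "h \<noteq> a" "\<bar>h - a\<bar> < 1 / (real k + 1)" for h
    proof (rule LIMSEQ_le_const2)
      show "(\<lambda>j. \<bar>\<phi> h - s j\<bar>) \<longlonglongrightarrow> \<bar>\<phi> h - l\<bar>" by (intro tendsto_intros l)
    qed (use k that in auto)
    with \<open>e > 0\<close> show "\<exists>d>0. \<forall>h. h \<noteq> a \<and> norm (h - a) < d \<longrightarrow> norm (\<phi> h - l) < e"
      by (intro exI[of _ "1 / (real k + 1)"]) fastforce
  qed
  then show ?thesis by blast
qed

lemma tendsto_at_iff_Cauchy:
  fixes \<phi> :: "real \<Rightarrow> real"
  shows "(\<exists>l. (\<phi> \<longlongrightarrow> l) (at a)) \<longleftrightarrow>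
    (\<forall>e>0. \<exists>d>0. \<forall>h h'. h \<noteq> a \<longrightarrow> h' \<noteq> a \<longrightarrow> \<bar>h - a\<bar> < d \<longrightarrow> \<bar>h' - a\<bar> < d \<longrightarrow>
       \<bar>\<phi> h - \<phi> h'\<bar> \<le> e)"
  (is "_ \<longleftrightarrow> ?Cauchy")
proof
  assume "\<exists>l. (\<phi> \<longlongrightarrow> l) (at a)"
  then obtain l where l: "(\<phi> \<longlongrightarrow> l) (at a)" by blast
  show ?Cauchy
  proof (intro allI impI)
    fix e :: real assume "e > 0"
    with l obtain d where "d > 0" and d: "\<And>h. h \<noteq> a \<Longrightarrow> \<bar>h - a\<bar> < d \<Longrightarrow> \<bar>\<phi> h - l\<bar> < e/2"
      unfolding LIM_eq by (metis half_gt_zero real_norm_def)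
    have "\<bar>\<phi> h - \<phi> h'\<bar> \<le> e"
      if "h \<noteq> a" "h' \<noteq> a" "\<bar>h - a\<bar> < d" "\<bar>h' - a\<bar> < d" for h h'
      using d[of h] d[of h'] that by linarith
    with \<open>d > 0\<close> show "\<exists>d>0. \<forall>h h'. h \<noteq> a \<longrightarrow> h' \<noteq> a \<longrightarrow> \<bar>h - a\<bar> < d \<longrightarrow> \<bar>h' - a\<bar> < d \<longrightarrow>
       \<bar>\<phi> h - \<phi> h'\<bar> \<le> e" by blast
  qed
qed (use ex_tendsto_at_if_Cauchy in blast)

definition difference_quotient :: "(real \<Rightarrow> real) \<Rightarrow> real \<Rightarrow> real \<Rightarrow> real" where
  "difference_quotient f x h = (f (x + h) - f x) / h"

lemma continuous_on_difference_quotient: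
  "continuous_on UNIV f \<Longrightarrow> continuous_on UNIV (\<lambda>x. difference_quotient f x h)"
  unfolding difference_quotient_def
  by (cases "h = 0") (auto intro!: continuous_intros continuous_on_compose2[of UNIV f])

definition dq_oscillation_le :: "(real \<Rightarrow> real) \<Rightarrow> nat \<Rightarrow> nat \<Rightarrow> real set" where
  "dq_oscillation_le f n k = {x. \<forall>h h'. h \<noteq> 0 \<longrightarrow> h' \<noteq> 0 \<longrightarrow> \<bar>h\<bar> < 1 / (real k + 1) \<longrightarrow>
      \<bar>h'\<bar> < 1 / (real k + 1) \<longrightarrow> \<bar>difference_quotient f x h - difference_quotient f x h'\<bar> \<le> 1 / (real n + 1)}"

lemma closed_dq_oscillation_le: "continuous_on UNIV f \<Longrightarrow> closed (dq_oscillation_le f n k)"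
  unfolding dq_oscillation_le_def
  by (intro closed_Collect_all closed_Collect_imp open_Collect_less closed_Collect_le)
     (auto intro!: continuous_intros continuous_on_difference_quotient)

lemma differentiable_points_eq: "{x. \<exists>D. DERIV f x :> D} = (\<Inter>n. \<Union>k. dq_oscillation_le f n k)"
proof (intro set_eqI)
  fix x
  have "(\<forall>e>0. \<exists>d>0. \<forall>h h'. h \<noteq> 0 \<longrightarrow> h' \<noteq> 0 \<longrightarrow> \<bar>h\<bar> < d \<longrightarrow> \<bar>h'\<bar> < d \<longrightarrow>
      \<bar>difference_quotient f x h - difference_quotient f x h'\<bar> \<le> e)
      \<longleftrightarrow> (\<forall>n. \<exists>k. x \<in> dq_oscillation_le f n k)"
  proof safe
    fix n
    assume "\<forall>e>0. \<exists>d>0. \<forall>h h'. h \<noteq> 0 \<longrightarrow> h' \<noteq> 0 \<longrightarrow> \<bar>h\<bar> < d \<longrightarrow> \<bar>h'\<bar> < d \<longrightarrow>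
      \<bar>difference_quotient f x h - difference_quotient f x h'\<bar> \<le> e"
    then obtain d where "d > 0" and d: "\<forall>h h'. h \<noteq> 0 \<longrightarrow> h' \<noteq> 0 \<longrightarrow> \<bar>h\<bar> < d \<longrightarrow> \<bar>h'\<bar> < d \<longrightarrow>
        \<bar>difference_quotient f x h - difference_quotient f x h'\<bar> \<le> 1 / (real n + 1)"
      by (metis divide_pos_pos of_nat_0_le_iff zero_less_one add_nonneg_pos)
    obtain k where "inverse (real (Suc k)) < d" using reals_Archimedean \<open>d > 0\<close> by blast
    then have "1 / (real k + 1) < d" by (simp add: inverse_eq_divide add.commute)
    with d have "x \<in> dq_oscillation_le f n k" unfolding dq_oscillation_le_def by force
    then show "\<exists>k. x \<in> dq_oscillation_le f n k" ..
  next
    fix e :: real assume "\<forall>n. \<exists>k. x \<in> dq_oscillation_le f n k" "e > 0"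
    moreover obtain n where "inverse (real (Suc n)) < e" using reals_Archimedean \<open>e > 0\<close> by blast
    ultimately obtain k where "x \<in> dq_oscillation_le f n k" "1 / (real n + 1) < e"
      by (auto simp: inverse_eq_divide add.commute)
    then show "\<exists>d>0. \<forall>h h'. h \<noteq> 0 \<longrightarrow> h' \<noteq> 0 \<longrightarrow> \<bar>h\<bar> < d \<longrightarrow> \<bar>h'\<bar> < d \<longrightarrow>
      \<bar>difference_quotient f x h - difference_quotient f x h'\<bar> \<le> e"
      unfolding dq_oscillation_le_def by (intro exI[of _ "1 / (real k + 1)"]) force
  qed
  moreover have "(\<exists>D. DERIV f x :> D) \<longleftrightarrow> (\<exists>l. (difference_quotient f x \<longlongrightarrow> l) (at 0))"
    unfolding DERIV_def difference_quotient_def by simp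
  ultimately show "x \<in> {x. \<exists>D. DERIV f x :> D} \<longleftrightarrow> x \<in> (\<Inter>n. \<Union>k. dq_oscillation_le f n k)"
    using tendsto_at_iff_Cauchy[of "difference_quotient f x" 0] by simp
qed

text \<open>Off the differentiability points, \<open>deriv f\<close> is the junk constant \<open>SOME D. False\<close>.\<close>
lemma borel_measurable_deriv:
  fixes f :: "real \<Rightarrow> real"
  assumes f: "continuous_on UNIV f"
  shows "deriv f \<in> borel_measurable borel"
proof -
  define Ds where "Ds = {x. \<exists>D. DERIV f x :> D}"
  have Ds_borel: "Ds \<in> sets borel"
    unfolding Ds_def differentiable_points_eq using closed_dq_oscillation_le[OF f]
    by (intro sets.countable_INT sets.countable_UN) auto
  define s where "s j x = difference_quotient f x (1 / (real j + 2))" for j x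
  define c where "c = (SOME D::real. False)"
  have s_borel: "(\<lambda>x. if x \<in> Ds then s j x else c) \<in> borel_measurable borel" for j
    unfolding s_def
    by (intro measurable_If_set borel_measurable_continuous_onI continuous_on_difference_quotient f)
       (auto simp: Ds_borel)
  have "(\<lambda>j. if x \<in> Ds then s j x else c) \<longlonglongrightarrow> deriv f x" for x
  proof (cases "x \<in> Ds")
    case True
    then obtain D where D: "DERIV f x :> D" unfolding Ds_def by blast
    then have "(difference_quotient f x \<longlongrightarrow> D) (at 0)"
      unfolding DERIV_def difference_quotient_def by simp
    moreover have "(\<lambda>j. 1 / (real j + 2)) \<longlonglongrightarrow> 0"
      using LIMSEQ_Suc[OF LIMSEQ_Suc[OF lim_inverse_n']] by (simp add: inverse_eq_divide add.commute)
    ultimately have "(\<lambda>j. s j x) \<longlonglongrightarrow> D"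
      unfolding s_def using LIMSEQ_SEQ_conv[of 0 "difference_quotient f x" D]
      by (simp add: add_nonneg_eq_0_iff)
    with True show ?thesis using DERIV_imp_deriv[OF D] by simp
  next
    case False
    then have "(\<lambda>D. DERIV f x :> D) = (\<lambda>D. False)" unfolding Ds_def by auto
    with False show ?thesis by (simp add: deriv_def c_def)
  qed
  then show ?thesis by (intro borel_measurable_LIMSEQ_real[OF _ s_borel])
qed

section \<open>Lebesgue points\<close>

lemma lmeasurable_cover_open_negligible:
  fixes V :: "real set"
  assumes "open V" "emeasure lborel V < ennreal e" "negligible (S - V)" "e > 0"
  shows "\<exists>T. S \<subseteq> T \<and> T \<in> lmeasurable \<and> measure lebesgue T \<le> e"
proof (intro exI conjI)
  have V: "V \<in> sets borel" using \<open>open V\<close> by (simp add: borel_open)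
  have V_lmeasurable: "V \<in> lmeasurable"
  proof -
    have "emeasure lborel V < top" using assms(2) ennreal_less_top order.strict_trans by blast
    then show ?thesis using V by (intro fmeasurableI) (auto simp: emeasure_completion)
  qed
  have "measure lebesgue V = enn2real (emeasure lborel V)" using V by (simp add: measure_def)
  also have "\<dots> \<le> e" using assms(2,4)
    by (metis enn2real_ennreal enn2real_mono ennreal_less_top less_imp_le)
  finally have "measure lebesgue V \<le> e" .
  have N: "S - V \<in> null_sets lebesgue" using assms(3) by (simp add: negligible_iff_null_sets)
  show "S \<subseteq> V \<union> (S - V)" by auto
  show "V \<union> (S - V) \<in> lmeasurable"
    using V_lmeasurable N by (intro fmeasurable.Un) (auto intro: fmeasurableI_null_sets)
  have "measure lebesgue (V \<union> (S - V)) \<le> measure lebesgue V + measure lebesgue (S - V)"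
    using V_lmeasurable N by (intro measure_Un_le) auto
  with \<open>measure lebesgue V \<le> e\<close> N show "measure lebesgue (V \<union> (S - V)) \<le> e"
    by (simp add: measure_eq_0_null_sets)
qed

lemma ball_borel_real[measurable]: "ball (x::real) r \<in> sets borel"
  by (simp add: borel_open)

lemma Vitali_cover_ball_mass:
  fixes \<nu> :: "real measure" and S U :: "real set"
  assumes sets_nu: "sets \<nu> = sets borel" and t: "t > 0" and U: "open U" "S \<subseteq> U"
    and S: "\<And>x d. x \<in> S \<Longrightarrow> d > 0 \<Longrightarrow> \<exists>r. 0 < r \<and> r < d \<and> ennreal (t * (2*r)) < emeasure \<nu> (ball x r)"
  obtains V where "open V" "negligible (S - V)" "ennreal t * emeasure lborel V \<le> emeasure \<nu> U"
proof -
  define K where "K = {(x,r). x \<in> S \<and> 0 < r \<and> ball x r \<subseteq> U \<and>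
      ennreal (t * (2*r)) < emeasure \<nu> (ball x r)}"
  have cover: "\<exists>i. i \<in> K \<and> x \<in> ball (fst i) (snd i) \<and> snd i < d" if x: "x \<in> S" "d > 0" for x d
  proof -
    obtain \<rho> where \<rho>: "\<rho> > 0" "ball x \<rho> \<subseteq> U" using U x open_contains_ball by blast
    then obtain r where r: "0 < r" "r < min d \<rho>" "ennreal (t * (2*r)) < emeasure \<nu> (ball x r)"
      using S[of x "min d \<rho>"] x by auto
    moreover have "ball x r \<subseteq> U" using \<rho> r by auto
    ultimately have "(x,r) \<in> K" unfolding K_def using x by auto
    then show ?thesis using r by (intro exI[of _ "(x,r)"]) auto
  qed
  obtain C where C: "countable C" "C \<subseteq> K"
    "pairwise (\<lambda>i j. disjnt (ball (fst i) (snd i)) (ball (fst j) (snd j))) C"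
    "negligible (S - (\<Union>i\<in>C. ball (fst i) (snd i)))"
    using Vitali_covering_theorem_balls[of S K fst snd, OF cover] by blast
  define V where "V = (\<Union>i\<in>C. ball (fst i) (snd i))"
  have disj: "disjoint_family_on (\<lambda>i. ball (fst i) (snd i)) C"
    using C(3) unfolding disjoint_family_on_def pairwise_def disjnt_def by blast
  have "ball (fst i) (snd i) \<subseteq> U" if "i \<in> C" for i
    using C(2) that unfolding K_def by (cases i) auto
  then have "V \<subseteq> U" unfolding V_def by blast
  have "emeasure lborel V = (\<integral>\<^sup>+i. emeasure lborel (ball (fst i) (snd i)) \<partial>count_space C)"
    unfolding V_def by (rule emeasure_UN_countable) (auto simp: C disj)
  then have "ennreal t * emeasure lborel V
      = (\<integral>\<^sup>+i. ennreal t * emeasure lborel (ball (fst i) (snd i)) \<partial>count_space C)"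
    by (simp add: nn_integral_cmult)
  also have "\<dots> \<le> (\<integral>\<^sup>+i. emeasure \<nu> (ball (fst i) (snd i)) \<partial>count_space C)"
  proof (intro nn_integral_mono)
    fix i assume "i \<in> space (count_space C)"
    then have i: "i \<in> K" using C(2) by auto
    then have "snd i > 0" unfolding K_def by auto
    then have "ennreal t * emeasure lborel (ball (fst i) (snd i)) = ennreal (t * (2 * snd i))"
      using t by (simp add: ball_eq_greaterThanLessThan ennreal_mult[symmetric])
    also have "\<dots> < emeasure \<nu> (ball (fst i) (snd i))" using i unfolding K_def by auto
    finally show "ennreal t * emeasure lborel (ball (fst i) (snd i)) \<le> emeasure \<nu> (ball (fst i) (snd i))"
      by simp
  qed
  also have "\<dots> = emeasure \<nu> V"
    unfolding V_def by (rule emeasure_UN_countable[symmetric]) (auto simp: C disj sets_nu)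
  also have "\<dots> \<le> emeasure \<nu> U"
    using \<open>V \<subseteq> U\<close> U by (intro emeasure_mono) (auto simp: sets_nu)
  finally have "ennreal t * emeasure lborel V \<le> emeasure \<nu> U" .
  moreover have "open V" unfolding V_def by auto
  ultimately show ?thesis using that C(4) unfolding V_def by blast
qed

text \<open>Outer regularity of the finite measure \<open>h \<cdot> \<lambda>\<close> puts the zero set of \<open>h\<close> inside an open set of
  small \<open>h\<close>-mass; Vitali's covering theorem then bounds the Lebesgue measure of the bad points.\<close>
lemma negligible_zeros_of_large_ball_mass:
  fixes h :: "real \<Rightarrow> real" and t :: real
  assumes hm: "h \<in> borel_measurable borel" and hnn: "\<And>x. 0 \<le> h x"
    and fin: "(\<integral>\<^sup>+x. ennreal (h x) \<partial>lborel) < \<infinity>" and t: "t > 0"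
  shows "negligible {x. h x = 0 \<and> (\<forall>d>0. \<exists>r. 0<r \<and> r<d \<and>
            ennreal (t * (2*r)) < (\<integral>\<^sup>+y. ennreal (h y) * indicator (ball x r) y \<partial>lborel))}"
    (is "negligible ?S")
proof -
  define \<nu> where "\<nu> = density lborel (\<lambda>x. ennreal (h x))"
  have sets_nu: "sets \<nu> = sets borel" unfolding \<nu>_def by simp
  have nu_eq: "emeasure \<nu> A = (\<integral>\<^sup>+y. ennreal (h y) * indicator A y \<partial>lborel)" if "A \<in> sets borel" for A
  proof -
    have "(\<lambda>x. ennreal (h x)) \<in> borel_measurable borel" using hm by measurable
    then show ?thesis unfolding \<nu>_def using that by (subst emeasure_density) auto
  qed
  define Z where "Z = {x. h x = 0}"
  have Zb: "Z \<in> sets borel" unfolding Z_def using hm by measurable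
  have "emeasure \<nu> Z = (\<integral>\<^sup>+(y::real). 0 \<partial>lborel)"
    unfolding nu_eq[OF Zb] by (rule nn_integral_cong) (auto simp: Z_def indicator_def)
  moreover have "emeasure \<nu> (space \<nu>) \<noteq> \<infinity>"
  proof -
    have "space \<nu> = UNIV" unfolding \<nu>_def by simp
    then show ?thesis using nu_eq[of UNIV] fin by simp
  qed
  ultimately have Z_regular: "(INF U \<in> {U. Z \<subseteq> U \<and> open U}. emeasure \<nu> U) = 0"
    using outer_regular[OF sets_nu _ Zb] by simp
  show ?thesis
    unfolding negligible_outer_le
  proof (intro allI impI)
    fix e :: real assume e: "e > 0"
    have "(INF U \<in> {U. Z \<subseteq> U \<and> open U}. emeasure \<nu> U) < ennreal (t*e)"
      using Z_regular t e by simp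
    then obtain U where U: "Z \<subseteq> U" "open U" "emeasure \<nu> U < ennreal (t*e)"
      unfolding INF_less_iff by blast
    have S_sub: "?S \<subseteq> U" using U(1) unfolding Z_def by auto
    have S_mass: "\<exists>r. 0 < r \<and> r < d \<and> ennreal (t * (2*r)) < emeasure \<nu> (ball x r)"
      if x: "x \<in> ?S" and d: "d > 0" for x d
    proof -
      from x d obtain r where "0 < r" "r < d"
        "ennreal (t * (2*r)) < (\<integral>\<^sup>+y. ennreal (h y) * indicator (ball x r) y \<partial>lborel)"
        by auto
      then show ?thesis using nu_eq[of "ball x r"] by (intro exI[of _ r]) simp
    qed
    obtain V where V: "open V" "negligible (?S - V)"
      and V_mass: "ennreal t * emeasure lborel V \<le> emeasure \<nu> U"
      by (rule Vitali_cover_ball_mass[OF sets_nu t U(2) S_sub S_mass])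
    have "emeasure \<nu> U < ennreal t * ennreal e" using U(3) t e by (simp add: ennreal_mult)
    with V_mass have "ennreal t * emeasure lborel V < ennreal t * ennreal e"
      by (rule le_less_trans)
    then have "emeasure lborel V < ennreal e"
      using mult_left_mono[of "ennreal e" "emeasure lborel V" "ennreal t"] not_le zero_le by blast
    with V e show "\<exists>T. ?S \<subseteq> T \<and> T \<in> lmeasurable \<and> measure lebesgue T \<le> e"
      by (intro lmeasurable_cover_open_negligible)
  qed
qed

lemma nn_integral_excess_on_ball_finite:
  fixes f :: "real \<Rightarrow> real"
  assumes fm: "f \<in> borel_measurable borel" and fin: "(\<integral>\<^sup>+x. ennreal \<bar>f x\<bar> \<partial>lborel) < \<infinity>"
    and "s \<ge> 0"
  shows "(\<integral>\<^sup>+y. ennreal (max 0 (\<bar>f y - q\<bar> - s) * indicator (ball 0 R) y) \<partial>lborel) < \<infinity>"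
proof -
  have "(\<integral>\<^sup>+y. ennreal (max 0 (\<bar>f y - q\<bar> - s) * indicator (ball 0 R) y) \<partial>lborel)
      \<le> (\<integral>\<^sup>+y. ennreal \<bar>f y\<bar> + ennreal \<bar>q\<bar> * indicator (ball 0 R) y \<partial>lborel)"
  proof (intro nn_integral_mono)
    fix y
    have "max 0 (\<bar>f y - q\<bar> - s) * indicator (ball 0 R) y \<le> \<bar>f y\<bar> + \<bar>q\<bar> * indicator (ball 0 R) y"
      using abs_triangle_ineq4[of "f y" q] \<open>s \<ge> 0\<close> by (auto simp: indicator_def)
    then have "ennreal (max 0 (\<bar>f y - q\<bar> - s) * indicator (ball 0 R) y)
        \<le> ennreal (\<bar>f y\<bar> + \<bar>q\<bar> * indicator (ball 0 R) y)"
      by (rule ennreal_leI)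
    also have "\<dots> = ennreal \<bar>f y\<bar> + ennreal \<bar>q\<bar> * indicator (ball 0 R) y"
      by (auto simp: indicator_def ennreal_plus)
    finally show "ennreal (max 0 (\<bar>f y - q\<bar> - s) * indicator (ball 0 R) y)
        \<le> ennreal \<bar>f y\<bar> + ennreal \<bar>q\<bar> * indicator (ball 0 R) y" .
  qed
  also have "\<dots> = (\<integral>\<^sup>+y. ennreal \<bar>f y\<bar> \<partial>lborel) + ennreal \<bar>q\<bar> * emeasure lborel (ball (0::real) R)"
    using fm by (subst nn_integral_add) (auto simp: nn_integral_cmult_indicator intro!: borel_measurable_times)
  also have "\<dots> < \<infinity>" using fin emeasure_lborel_ball_finite[of "0::real" R]
    by (simp add: ennreal_mult_less_top)
  finally show ?thesis .
qed

definition lebesgue_point :: "(real \<Rightarrow> real) \<Rightarrow> real \<Rightarrow> bool" where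
  "lebesgue_point f x \<longleftrightarrow> (\<forall>e>0. \<exists>d>0. \<forall>r. 0 < r \<longrightarrow> r < d \<longrightarrow>
     (\<integral>\<^sup>+y. ennreal \<bar>f y - f x\<bar> * indicator (ball x r) y \<partial>lborel) \<le> ennreal (e * (2 * r)))"

lemma nn_integral_deviation_on_ball_le:
  fixes f :: "real \<Rightarrow> real"
  assumes fm: "f \<in> borel_measurable borel" and s: "s > 0" and q: "\<bar>f x - q\<bar> \<le> s"
    and r: "r > 0" and R: "ball x r \<subseteq> ball 0 R"
    and excess: "(\<integral>\<^sup>+y. ennreal (max 0 (\<bar>f y - q\<bar> - s) * indicator (ball 0 R) y) * indicator (ball x r) y
        \<partial>lborel) \<le> ennreal (s * (2*r))"
  shows "(\<integral>\<^sup>+y. ennreal \<bar>f y - f x\<bar> * indicator (ball x r) y \<partial>lborel) \<le> ennreal (3 * s * (2*r))"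
proof -
  define H where "H y = max 0 (\<bar>f y - q\<bar> - s) * indicator (ball 0 R) y" for y
  have "(\<integral>\<^sup>+y. ennreal \<bar>f y - f x\<bar> * indicator (ball x r) y \<partial>lborel)
      \<le> (\<integral>\<^sup>+y. ennreal (H y) * indicator (ball x r) y + ennreal (2 * s) * indicator (ball x r) y \<partial>lborel)"
  proof (intro nn_integral_mono)
    fix y
    show "ennreal \<bar>f y - f x\<bar> * indicator (ball x r) y
         \<le> ennreal (H y) * indicator (ball x r) y + ennreal (2 * s) * indicator (ball x r) y"
    proof (cases "y \<in> ball x r")
      case True
      then have "H y = max 0 (\<bar>f y - q\<bar> - s)" using R unfolding H_def by auto
      then have "\<bar>f y - f x\<bar> \<le> H y + 2 * s" using q by linarith
      then have "ennreal \<bar>f y - f x\<bar> \<le> ennreal (H y + 2 * s)" by (rule ennreal_leI)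
      also have "\<dots> = ennreal (H y) + ennreal (2 * s)"
        using s by (intro ennreal_plus) (auto simp: H_def)
      finally show ?thesis using True by simp
    qed simp
  qed
  also have "\<dots> = (\<integral>\<^sup>+y. ennreal (H y) * indicator (ball x r) y \<partial>lborel) + ennreal (2 * s) * emeasure lborel (ball x r)"
    using fm by (subst nn_integral_add) (auto simp: nn_integral_cmult_indicator H_def)
  also have "\<dots> \<le> ennreal (s * (2*r)) + ennreal (2 * s) * ennreal (2*r)"
    using excess r unfolding H_def by (intro add_mono) (auto simp: ball_eq_greaterThanLessThan)
  also have "\<dots> = ennreal (3 * s * (2*r))"
    using s r by (simp add: ennreal_mult[symmetric] ennreal_plus[symmetric] algebra_simps)
  finally show ?thesis .
qed

text \<open>Non-Lebesgue points lie in countably many sets as in \<open>negligible_zeros_of_large_ball_mass\<close>, one for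
  each rational level \<open>q = k/(n+1)\<close>, tolerance \<open>s = 1/(n+1)\<close> and radius \<open>R\<close>, applied to the excess
  \<open>max 0 (|f - q| - s)\<close> truncated to \<open>ball 0 R\<close>.\<close>
lemma negligible_not_lebesgue_point:
  fixes f :: "real \<Rightarrow> real"
  assumes fm: "f \<in> borel_measurable borel" and fin: "(\<integral>\<^sup>+x. ennreal \<bar>f x\<bar> \<partial>lborel) < \<infinity>"
  shows "negligible {x. \<not> lebesgue_point f x}"
proof -
  define H where "H = (\<lambda>(n::nat,k::int,R::nat) y. max 0 (\<bar>f y - real_of_int k/(real n+1)\<bar> - 1/(real n+1)) * indicator (ball 0 (real R)) y)"
  define S where "S = (\<lambda>(p::nat\<times>int\<times>nat, j::nat). {x. H p x = 0 \<and> (\<forall>d>0. \<exists>r. 0<r \<and> r<d \<and>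
            ennreal (1/(real j+1) * (2*r)) < (\<integral>\<^sup>+y. ennreal (H p y) * indicator (ball x r) y \<partial>lborel))})"
  have Hm: "H p \<in> borel_measurable borel" for p
    unfolding H_def using fm by (cases p) simp
  have Hnn: "0 \<le> H p y" for p y unfolding H_def by (cases p) auto
  have Hfin: "(\<integral>\<^sup>+y. ennreal (H p y) \<partial>lborel) < \<infinity>" for p
    unfolding H_def using nn_integral_excess_on_ball_finite[OF fm fin] by (cases p) simp
  have negS: "negligible (S pj)" for pj
  proof -
    obtain p j where pj: "pj = (p,j)" by (cases pj)
    have "1/(real j+1) > 0" by simp
    from negligible_zeros_of_large_ball_mass[OF Hm Hnn Hfin this] show ?thesis unfolding pj S_def prod.case .
  qed
  define N where "N = (\<Union>pj. S pj)"
  have negN: "negligible N" unfolding N_def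
    by (rule negligible_countable_Union) (auto intro: negS)
  have main: "\<exists>d>0. \<forall>r. 0<r \<longrightarrow> r<d \<longrightarrow>
           (\<integral>\<^sup>+y. ennreal \<bar>f y - f x\<bar> * indicator (ball x r) y \<partial>lborel) \<le> ennreal (e*(2*r))"
    if x: "x \<notin> N" and e: "e > 0" for x e
  proof -
    obtain n where n: "inverse (real (Suc n)) < e/3" using reals_Archimedean[of "e/3"] e by auto
    define s where "s = 1/(real n+1)"
    have s_pos: "s > 0" unfolding s_def by simp
    have s3: "3 * s \<le> e" using n unfolding s_def by (simp add: field_simps)
    define k where "k = \<lfloor>f x * (real n+1)\<rfloor>"
    define q where "q = real_of_int k/(real n+1)"
    have q1: "q \<le> f x" unfolding q_def k_def by (simp add: field_simps)
    have q2: "f x < q + s" unfolding q_def k_def s_def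
    proof -
      have "f x * (real n+1) < real_of_int \<lfloor>f x * (real n+1)\<rfloor> + 1" by linarith
      then show "f x < real_of_int \<lfloor>f x * (real n + 1)\<rfloor> / (real n + 1) + 1 / (real n + 1)"
        by (simp add: field_simps)
    qed
    define R where "R = nat \<lceil>\<bar>x\<bar>\<rceil> + 2"
    have R: "\<bar>x\<bar> + 1 < real R" unfolding R_def by linarith
    define p where "p = (n,k,R)"
    have Hx: "H p x = 0" unfolding H_def p_def using q1 q2
      by (simp add: q_def[symmetric] s_def[symmetric])
    have "x \<notin> S (p,n)" using x unfolding N_def by blast
    then obtain d where d: "d > 0" "\<And>r. 0<r \<Longrightarrow> r<d \<Longrightarrow>
        \<not> ennreal (1/(real n+1) * (2*r)) < (\<integral>\<^sup>+y. ennreal (H p y) * indicator (ball x r) y \<partial>lborel)"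
      unfolding S_def using Hx by auto
    show ?thesis
    proof (intro exI[of _ "min d 1"] conjI allI impI)
      show "min d 1 > 0" using d by simp
      fix r assume r: "0 < r" "r < min d 1"
      have "(\<integral>\<^sup>+y. ennreal (H p y) * indicator (ball x r) y \<partial>lborel) \<le> ennreal (s * (2*r))"
        using d(2)[of r] r unfolding s_def by (simp add: not_less)
      moreover have "ball x r \<subseteq> ball 0 (real R)" using r R by (auto simp: dist_real_def)
      ultimately have "(\<integral>\<^sup>+y. ennreal \<bar>f y - f x\<bar> * indicator (ball x r) y \<partial>lborel) \<le> ennreal (3 * s * (2*r))"
        using q1 q2 s_pos r unfolding H_def p_def q_def s_def
        by (intro nn_integral_deviation_on_ball_le[OF fm]) auto
      also have "\<dots> \<le> ennreal (e*(2*r))"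
        using s3 r by (intro ennreal_leI mult_right_mono) auto
      finally show "(\<integral>\<^sup>+y. ennreal \<bar>f y - f x\<bar> * indicator (ball x r) y \<partial>lborel) \<le> ennreal (e*(2*r))" .
    qed
  qed
  have "{x. \<not> lebesgue_point f x} \<subseteq> N"
    using main unfolding lebesgue_point_def by blast
  with negN show ?thesis by (rule negligible_subset)
qed


section \<open>Weak derivatives and the energy\<close>

lemma indefinite_integral_diff:
  fixes g u :: "real \<Rightarrow> real"
  assumes gi: "set_integrable lborel {-L..L} g"
    and u: "\<forall>x\<in>{-L..L}. u x = u (-L) + (LBINT t=-L..x. g t)"
    and ab: "-L \<le> a" "a \<le> b" "b \<le> L"
  shows "u b - u a = (LINT t:{a..b}|lborel. g t)"
proof -
  have int: "interval_lebesgue_integrable lborel (ereal (-L)) (ereal b) g"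
  proof -
    have "set_integrable lborel {-L<..<b} g"
      by (rule set_integrable_subset[OF gi]) (use ab in auto)
    then show ?thesis unfolding interval_lebesgue_integrable_def using ab by simp
  qed
  have mm: "min (ereal (-L)) (min (ereal a) (ereal b)) = ereal (-L)"
           "max (ereal (-L)) (max (ereal a) (ereal b)) = ereal b" using ab by auto
  have "(LBINT t=-L..a. g t) + (LBINT t=a..b. g t) = (LBINT t=-L..b. g t)"
    by (rule interval_integral_sum) (simp only: mm int)
  moreover have "u b = u (-L) + (LBINT t=-L..b. g t)" "u a = u (-L) + (LBINT t=-L..a. g t)"
    using ab by (intro bspec[OF u]; simp)+
  moreover have "(LBINT t=a..b. g t) = (LINT t:{a..b}|lborel. g t)"
    using ab by (simp add: interval_integral_Icc)
  ultimately show ?thesis by simp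
qed

lemma indefinite_integral_linearization_error:
  fixes g u :: "real \<Rightarrow> real"
  assumes gi: "set_integrable lborel {-L..L} g"
    and u: "\<forall>x\<in>{-L..L}. u x = u (-L) + (LBINT t=-L..x. g t)"
    and ab: "-L \<le> a" "a \<le> b" "b \<le> L"
  shows "ennreal \<bar>u b - u a - (b-a)*c\<bar> \<le> (\<integral>\<^sup>+t. ennreal \<bar>g t - c\<bar> * indicator {a..b} t \<partial>lborel)"
proof -
  have gab: "set_integrable lborel {a..b} g"
    by (rule set_integrable_subset[OF gi]) (use ab in auto)
  have cab: "set_integrable lborel {a..b} (\<lambda>t. c)"
    by (rule borel_integrable_atLeastAtMost') simp
  have dab: "set_integrable lborel {a..b} (\<lambda>t. g t - c)"
    using gab cab by simp
  have "u b - u a - (b-a)*c = (LINT t:{a..b}|lborel. g t - c)"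
    using indefinite_integral_diff[OF gi u ab] gab cab ab by (simp add: set_integral_const)
  then have "\<bar>u b - u a - (b-a)*c\<bar> \<le> (LINT t:{a..b}|lborel. \<bar>g t - c\<bar>)"
    using set_integral_norm_bound[OF dab] by simp
  then have "ennreal \<bar>u b - u a - (b-a)*c\<bar> \<le> ennreal (LINT t:{a..b}|lborel. \<bar>g t - c\<bar>)"
    by (rule ennreal_leI)
  also have "(LINT t:{a..b}|lborel. \<bar>g t - c\<bar>) = (\<integral>t. indicator {a..b} t * \<bar>g t - c\<bar> \<partial>lborel)"
    by (simp add: set_lebesgue_integral_def)
  also have "ennreal \<dots> = (\<integral>\<^sup>+t. ennreal (indicator {a..b} t * \<bar>g t - c\<bar>) \<partial>lborel)"
  proof (rule nn_integral_eq_integral[symmetric])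
    have "set_integrable lborel {a..b} (\<lambda>t. \<bar>g t - c\<bar>)"
      using dab by (simp add: set_integrable_abs)
    then show "integrable lborel (\<lambda>t. indicator {a..b} t * \<bar>g t - c\<bar>)"
      by (simp add: set_integrable_def)
  qed auto
  also have "\<dots> = (\<integral>\<^sup>+t. ennreal \<bar>g t - c\<bar> * indicator {a..b} t \<partial>lborel)"
    by (intro nn_integral_cong) (simp split: split_indicator)
  finally show ?thesis .
qed

lemma indefinite_integral_linearization_error_ball:
  fixes g u :: "real \<Rightarrow> real"
  assumes gi: "set_integrable lborel {-L..L} g"
    and u: "\<forall>x\<in>{-L..L}. u x = u (-L) + (LBINT t=-L..x. g t)"
    and xy: "x \<in> {-L..L}" "y \<in> {-L..L}" and r: "\<bar>y - x\<bar> < r"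
  defines "f \<equiv> \<lambda>t. indicator {-L..L} t * g t"
  shows "ennreal \<bar>u y - u x - (y - x) * g x\<bar> \<le> (\<integral>\<^sup>+t. ennreal \<bar>f t - f x\<bar> * indicator (ball x r) t \<partial>lborel)"
proof -
  have "ennreal \<bar>u y - u x - (y - x) * g x\<bar>
      \<le> (\<integral>\<^sup>+t. ennreal \<bar>g t - g x\<bar> * indicator {min x y..max x y} t \<partial>lborel)"
  proof (cases "x \<le> y")
    case True
    then show ?thesis using indefinite_integral_linearization_error[OF gi u, of x y "g x"] xy by simp
  next
    case False
    have "\<bar>u y - u x - (y - x) * g x\<bar> = \<bar>u x - u y - (x - y) * g x\<bar>" by argo
    then show ?thesis using indefinite_integral_linearization_error[OF gi u, of y x "g x"] xy False by simp
  qed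
  also have "\<dots> \<le> (\<integral>\<^sup>+t. ennreal \<bar>f t - f x\<bar> * indicator (ball x r) t \<partial>lborel)"
  proof (intro nn_integral_mono)
    fix t
    show "ennreal \<bar>g t - g x\<bar> * indicator {min x y..max x y} t \<le> ennreal \<bar>f t - f x\<bar> * indicator (ball x r) t"
    proof (cases "t \<in> {min x y..max x y}")
      case True
      then have "t \<in> {-L..L}" "dist x t < r" using xy r by (auto simp: dist_real_def)
      then show ?thesis using True xy by (simp add: f_def)
    qed simp
  qed
  finally show ?thesis .
qed

lemma DERIV_indefinite_integral_at_lebesgue_point:
  fixes g u :: "real \<Rightarrow> real"
  assumes gi: "set_integrable lborel {-L..L} g"
    and u: "\<forall>x\<in>{-L..L}. u x = u (-L) + (LBINT t=-L..x. g t)"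
    and x: "x \<in> {-L<..<L}" and lp: "lebesgue_point (\<lambda>y. indicator {-L..L} y * g y) x"
  shows "DERIV u x :> g x"
proof -
  define f where "f y = indicator {-L..L} y * g y" for y
  have NP: "\<exists>d>0. \<forall>r. 0<r \<longrightarrow> r<d \<longrightarrow>
      (\<integral>\<^sup>+y. ennreal \<bar>f y - f x\<bar> * indicator (ball x r) y \<partial>lborel) \<le> ennreal (e*(2*r))" if "e > 0" for e
    using lp that unfolding lebesgue_point_def f_def by blast
  have "((\<lambda>y. (u y - u x) / (y - x)) \<longlongrightarrow> g x) (at x)"
    unfolding LIM_eq
  proof (intro allI impI)
    fix e :: real assume e: "e > 0"
    obtain d where d: "d > 0" and dP: "\<And>r. 0<r \<Longrightarrow> r<d \<Longrightarrow>
         (\<integral>\<^sup>+y. ennreal \<bar>f y - f x\<bar> * indicator (ball x r) y \<partial>lborel) \<le> ennreal (e/8*(2*r))"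
      using NP[of "e/8"] e by auto
    define s where "s = min (d/2) (min (x + L) (L - x))"
    have s: "s > 0" unfolding s_def using d x by auto
    have "norm ((u y - u x) / (y - x) - g x) < e" if y: "y \<noteq> x" "norm (y - x) < s" for y
    proof -
      define r where "r = 2 * \<bar>y - x\<bar>"
      have r: "0 < r" "r < d" using y s_def unfolding r_def by auto
      have yL: "-L \<le> y" "y \<le> L" using y unfolding s_def by auto
      have "ennreal \<bar>u y - u x - (y - x) * g x\<bar>
          \<le> (\<integral>\<^sup>+t. ennreal \<bar>f t - f x\<bar> * indicator (ball x r) t \<partial>lborel)"
        using indefinite_integral_linearization_error_ball[OF gi u, of x y r] x yL y
        unfolding f_def r_def by auto
      also have "(\<integral>\<^sup>+t. ennreal \<bar>f t - f x\<bar> * indicator (ball x r) t \<partial>lborel) \<le> ennreal (e/8*(2*r))"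
        using dP[OF r] .
      finally have "\<bar>u y - u x - (y - x) * g x\<bar> \<le> e/8*(2*r)"
        using e r by (subst (asm) ennreal_le_iff) auto
      then have "\<bar>u y - u x - (y - x) * g x\<bar> \<le> e/2 * \<bar>y - x\<bar>" unfolding r_def by simp
      moreover have "(u y - u x) / (y - x) - g x = (u y - u x - (y - x) * g x) / (y - x)"
        using y by (simp add: field_simps)
      ultimately have "\<bar>(u y - u x) / (y - x) - g x\<bar> \<le> e/2"
        using y by (simp add: abs_divide divide_le_eq)
      then show ?thesis using e by simp
    qed
    then show "\<exists>s>0. \<forall>y. y \<noteq> x \<and> norm (y - x) < s \<longrightarrow> norm ((u y - u x) / (y - x) - g x) < e"
      using s by blast
  qed
  then show ?thesis by (simp add: has_field_derivative_iff)
qed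

lemma AE_DERIV_indefinite_integral:
  fixes g u :: "real \<Rightarrow> real"
  assumes gm: "g \<in> borel_measurable lborel" and gi: "set_integrable lborel {-L..L} g"
    and u: "\<forall>x\<in>{-L..L}. u x = u (-L) + (LBINT t=-L..x. g t)"
  shows "AE x in lborel. x \<in> {-L<..<L} \<longrightarrow> DERIV u x :> g x"
proof -
  define f where "f y = indicator {-L..L} y * g y" for y
  have "integrable lborel f" using gi unfolding set_integrable_def f_def by simp
  then have "(\<integral>\<^sup>+x. ennreal \<bar>f x\<bar> \<partial>lborel) < \<infinity>"
    unfolding integrable_iff_bounded by simp
  moreover have "f \<in> borel_measurable borel" unfolding f_def using gm by simp
  ultimately have "{x. \<not> lebesgue_point f x} \<in> null_sets lebesgue"
    using negligible_not_lebesgue_point negligible_iff_null_sets by blast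
  then have "AE x in lebesgue. lebesgue_point f x"
    using AE_not_in by fastforce
  then have "AE x in lborel. lebesgue_point (\<lambda>y. indicator {-L..L} y * g y) x"
    by (simp add: AE_completion_iff f_def[abs_def])
  then show ?thesis
    by eventually_elim (use DERIV_indefinite_integral_at_lebesgue_point[OF gi u] in auto)
qed


lemma continuous_on_indefinite_set_integral:
  fixes g w :: "real \<Rightarrow> real"
  assumes gi: "set_integrable lborel {-L..L} g"
    and w: "\<forall>x\<in>{-L..L}. w x = w (-L) + (LBINT t=-L..x. g t)"
  shows "continuous_on {-L..L} w"
proof -
  have gI: "g integrable_on {-L..L}" using set_borel_integral_eq_integral(1)[OF gi] .
  have eq: "w x = w (-L) + integral {-L..x} g" if x: "x \<in> {-L..L}" for x
  proof -
    have si: "set_integrable lborel {-L..x} g"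
      by (rule set_integrable_subset[OF gi]) (use x in auto)
    have "w x = w (-L) + (LBINT t=-L..x. g t)" using w x by blast
    also have "(LBINT t=-L..x. g t) = (LINT t:{-L..x}|lborel. g t)"
      using x by (simp add: interval_integral_Icc)
    also have "\<dots> = integral {-L..x} g" using set_borel_integral_eq_integral(2)[OF si] .
    finally show ?thesis .
  qed
  have "continuous_on {-L..L} (\<lambda>x. w (-L) + integral {-L..x} g)"
    by (intro continuous_intros indefinite_integral_continuous_1 gI)
  then show ?thesis using eq by (metis (no_types, lifting) continuous_on_eq)
qed

lemma set_integrable_continuous_mult:
  fixes c f :: "real \<Rightarrow> real"
  assumes c: "continuous_on UNIV c" and fm: "f \<in> borel_measurable borel"
    and fi: "set_integrable lborel {p..q} f"
  shows "set_integrable lborel {p..q} (\<lambda>x. c x * f x)"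
proof -
  have "bounded (c ` {p..q})"
    by (intro compact_imp_bounded compact_continuous_image continuous_on_subset[OF c]) auto
  then obtain A where A: "\<And>x. x \<in> {p..q} \<Longrightarrow> \<bar>c x\<bar> \<le> A" unfolding bounded_real by blast
  show ?thesis
  proof (rule set_integrable_bound)
  show "set_integrable lborel {p..q} (\<lambda>x. A * f x)" using fi by simp
  show "AE x\<in>{p..q} in lborel. norm (c x * f x) \<le> norm (A * f x)"
    using A by (intro AE_I2) (force simp: abs_mult intro!: mult_right_mono)
  show "set_borel_measurable lborel {p..q} (\<lambda>x. c x * f x)"
    using borel_measurable_continuous_onI[OF c] fm unfolding set_borel_measurable_def by simp
  qed
qed

lemma set_integrable_energy_density:
  fixes a b G g w :: "real \<Rightarrow> real"
  assumes ca: "continuous_on UNIV a" and cb: "continuous_on UNIV b" and cG: "continuous_on UNIV G"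
    and gm: "g \<in> borel_measurable lborel" and g2: "set_integrable lborel {-L..L} (\<lambda>x. (g x)\<^sup>2)"
    and cw: "continuous_on {-L..L} w"
  shows "set_integrable lborel {-L..L} (\<lambda>x. (1/2) * (g x)\<^sup>2 * a x + G (w x) * b x)"
proof (rule set_integral_add(1))
  have "set_integrable lborel {-L..L} (\<lambda>x. a x * ((1/2) * (g x)\<^sup>2))"
    using gm g2 by (intro set_integrable_continuous_mult[OF ca]) auto
  then show "set_integrable lborel {-L..L} (\<lambda>x. (1/2) * (g x)\<^sup>2 * a x)"
    by (simp add: mult.commute)
  have "continuous_on {-L..L} (\<lambda>x. G (w x) * b x)"
    by (intro continuous_intros continuous_on_compose2[OF cG cw] continuous_on_subset[OF cb]) auto
  then show "set_integrable lborel {-L..L} (\<lambda>x. G (w x) * b x)"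
    by (rule borel_integrable_atLeastAtMost')
qed

text \<open>\<open>deriv w\<close> is measurable only once \<open>w\<close> is continuous on all of \<open>\<real>\<close>, hence the clamped extension.\<close>
lemma energy_eq_weak_derivative:
  fixes a b G w g :: "real \<Rightarrow> real"
  assumes ca: "continuous_on UNIV a" and cb: "continuous_on UNIV b" and cG: "continuous_on UNIV G"
    and L: "L > 0"
    and gm: "g \<in> borel_measurable lborel" and gi: "set_integrable lborel {-L..L} g"
    and w: "\<forall>x\<in>{-L..L}. w x = w (-L) + (LBINT t=-L..x. g t)"
  shows "energy a b G L w = (LINT x:{-L..L}|lborel. (1/2) * (g x)\<^sup>2 * a x + G (w x) * b x)"
proof -
  define wt where "wt x = w (clamp (-L) L x)" for x
  have cw: "continuous_on {-L..L} w" by (rule continuous_on_indefinite_set_integral[OF gi w])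
  have cwt: "continuous_on UNIV wt"
    unfolding wt_def using cw by (intro clamp_continuous_on) (simp add: cbox_interval)
  have wtw: "wt x = w x" if "x \<in> {-L..L}" for x
    using that unfolding wt_def by (simp add: clamp_cancel_cbox cbox_interval)
  have dwt: "deriv w x = deriv wt x" if x: "x \<in> {-L<..<L}" for x
  proof (rule deriv_cong_ev)
    have "eventually (\<lambda>y. y \<in> {-L<..<L}) (nhds x)"
      using x by (intro eventually_nhds_in_open) auto
    then show "eventually (\<lambda>y. w y = wt y) (nhds x)"
      by eventually_elim (simp add: wtw)
  qed simp
  have Gwt: "(\<lambda>x. G (wt x)) \<in> borel_measurable borel"
    by (intro borel_measurable_continuous_onI continuous_on_compose2[OF cG cwt]) auto
  have ab: "a \<in> borel_measurable borel" "b \<in> borel_measurable borel"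
    using ca cb by (auto intro: borel_measurable_continuous_onI)
  define E1 where "E1 x = (1/2) * (deriv wt x)\<^sup>2 * a x + G (wt x) * b x" for x
  define E2 where "E2 x = (1/2) * (g x)\<^sup>2 * a x + G (wt x) * b x" for x
  have E1m: "E1 \<in> borel_measurable lborel"
    unfolding E1_def using borel_measurable_deriv[OF cwt] ab Gwt by simp
  have E2m: "E2 \<in> borel_measurable lborel" unfolding E2_def using gm ab Gwt by simp
  have "energy a b G L w = (LINT x:{-L<..<L}|lborel. (1/2) * (deriv w x)\<^sup>2 * a x + G (w x) * b x)"
    unfolding energy_def interval_lebesgue_integral_def using L by simp
  also have "\<dots> = (LINT x:{-L<..<L}|lborel. E1 x)"
    by (rule set_lebesgue_integral_cong) (auto simp: E1_def dwt wtw)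
  also have "\<dots> = (LINT x:{-L<..<L}|lborel. E2 x)"
  proof (rule set_lebesgue_integral_cong_AE)
    show "AE x\<in>{-L<..<L} in lborel. E1 x = E2 x"
      using AE_DERIV_indefinite_integral[OF gm gi w]
      by eventually_elim (auto simp: E1_def E2_def dwt[symmetric] DERIV_imp_deriv)
  qed (use E1m E2m in auto)
  also have "\<dots> = (LINT x:{-L..L}|lborel. E2 x)"
    by (rule set_integral_discrete_difference[where X="{-L, L}"]) auto
  also have "\<dots> = (LINT x:{-L..L}|lborel. (1/2) * (g x)\<^sup>2 * a x + G (w x) * b x)"
    by (rule set_lebesgue_integral_cong) (auto simp: E2_def wtw)
  finally show ?thesis .
qed


section \<open>Functions vanishing at the origin\<close>

lemma set_integral_nonneg:
  fixes f :: "'a \<Rightarrow> real"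
  shows "(\<And>x. x \<in> A \<Longrightarrow> 0 \<le> f x) \<Longrightarrow> 0 \<le> (LINT x:A|M. f x)"
  unfolding set_lebesgue_integral_def by (rule integral_nonneg_AE) (auto split: split_indicator)

lemma set_integral_mono_subset:
  fixes f :: "real \<Rightarrow> real"
  assumes fi: "set_integrable lborel A f" and B: "B \<in> sets borel" "B \<subseteq> A"
    and nn: "\<And>x. x \<in> A \<Longrightarrow> 0 \<le> f x"
  shows "(LINT x:B|lborel. f x) \<le> (LINT x:A|lborel. f x)"
proof -
  have fiB: "set_integrable lborel B f" by (rule set_integrable_subset[OF fi]) (use B in auto)
  show ?thesis
    unfolding set_lebesgue_integral_def
  proof (rule integral_mono)
    show "integrable lborel (\<lambda>x. indicator B x *\<^sub>R f x)" using fiB unfolding set_integrable_def .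
    show "integrable lborel (\<lambda>x. indicator A x *\<^sub>R f x)" using fi unfolding set_integrable_def .
    fix x show "indicator B x *\<^sub>R f x \<le> indicator A x *\<^sub>R f x"
      using B nn[of x] by (auto split: split_indicator)
  qed
qed

lemma continuous_on_compact_pos_lower_bound:
  fixes f :: "real \<Rightarrow> real"
  assumes "continuous_on S f" "compact S" "S \<noteq> {}" "\<And>x. x \<in> S \<Longrightarrow> f x > 0"
  obtains \<alpha> where "\<alpha> > 0" "\<And>x. x \<in> S \<Longrightarrow> \<alpha> \<le> f x"
proof -
  obtain x0 where "x0 \<in> S" "\<forall>y\<in>S. f x0 \<le> f y" using continuous_attains_inf[OF assms(2,3,1)] by blast
  then show ?thesis using assms(4) that by blast
qed

lemma set_integral_Icc_square_le:
  fixes g :: "real \<Rightarrow> real"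
  assumes gi: "set_integrable lborel {p..q} g" and g2: "set_integrable lborel {p..q} (\<lambda>t. (g t)\<^sup>2)"
    and pq: "p < q"
  shows "(LINT t:{p..q}|lborel. g t)\<^sup>2 \<le> (q - p) * (LINT t:{p..q}|lborel. (g t)\<^sup>2)"
proof -
  define I where "I = (LINT t:{p..q}|lborel. g t)"
  define I2 where "I2 = (LINT t:{p..q}|lborel. (g t)\<^sup>2)"
  define x where "x = q - p"
  have x: "x > 0" using pq unfolding x_def by simp
  define c where "c = I / x"
  have ci: "set_integrable lborel {p..q} (\<lambda>t. c\<^sup>2)"
    by (rule borel_integrable_atLeastAtMost') simp
  have i1: "set_integrable lborel {p..q} (\<lambda>t. 2*c * g t)" using gi by simp
  have "(\<lambda>t. (g t - c)\<^sup>2) = (\<lambda>t. ((g t)\<^sup>2 - 2*c * g t) + c\<^sup>2)"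
    by (simp add: power2_eq_square algebra_simps)
  then have "(LINT t:{p..q}|lborel. (g t - c)\<^sup>2) = (LINT t:{p..q}|lborel. ((g t)\<^sup>2 - 2*c * g t) + c\<^sup>2)"
    by simp
  also have "\<dots> = (LINT t:{p..q}|lborel. (g t)\<^sup>2 - 2*c * g t) + (LINT t:{p..q}|lborel. c\<^sup>2)"
    using g2 i1 ci by (intro set_integral_add(2)) auto
  also have "(LINT t:{p..q}|lborel. (g t)\<^sup>2 - 2*c * g t) = I2 - 2*c*I"
    using g2 i1 unfolding I2_def I_def by (subst set_integral_diff(2)) auto
  also have "(LINT t:{p..q}|lborel. c\<^sup>2) = (q - p) * c\<^sup>2"
    using pq by (simp add: set_integral_const)
  finally have eq: "(LINT t:{p..q}|lborel. (g t - c)\<^sup>2) = I2 - 2*c*I + (q - p)*c\<^sup>2" .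
  have "0 \<le> (LINT t:{p..q}|lborel. (g t - c)\<^sup>2)"
    by (rule set_integral_nonneg) simp
  then have "0 \<le> x * (I2 - 2*c*I + x*c\<^sup>2)" using eq x unfolding x_def by simp
  moreover have "x * (I2 - 2*c*I + x*c\<^sup>2) = x * I2 - I\<^sup>2"
    unfolding c_def using x by (simp add: field_simps power2_eq_square)
  ultimately show ?thesis unfolding I_def[symmetric] I2_def[symmetric] x_def by simp
qed

lemma sq_le_set_integral_sq_if_far_from_zero:
  fixes g u :: "real \<Rightarrow> real"
  assumes gi: "set_integrable lborel {-L..L} g" and g2: "set_integrable lborel {-L..L} (\<lambda>x. (g x)\<^sup>2)"
    and u: "\<forall>x\<in>{-L..L}. u x = u (-L) + (LBINT t=-L..x. g t)"
    and L: "L \<ge> 1" and u0: "u 0 = 0" and x0: "x0 \<in> {0..1}" "c \<le> \<bar>u x0\<bar>" and c: "c > 0"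
  shows "c\<^sup>2 \<le> (LINT t:{0..1}|lborel. (g t)\<^sup>2)"
proof -
  have "x0 > 0" using x0 u0 c by (cases "x0 = 0") auto
  have "u x0 - u 0 = (LINT t:{0..x0}|lborel. g t)"
    by (rule indefinite_integral_diff[OF gi u]) (use x0 L in auto)
  then have ux0: "u x0 = (LINT t:{0..x0}|lborel. g t)" using u0 by simp
  have gi0: "set_integrable lborel {0..x0} g"
    by (rule set_integrable_subset[OF gi]) (use x0 L in auto)
  have g20: "set_integrable lborel {0..x0} (\<lambda>t. (g t)\<^sup>2)"
    by (rule set_integrable_subset[OF g2]) (use x0 L in auto)
  have g21: "set_integrable lborel {0..1} (\<lambda>t. (g t)\<^sup>2)"
    by (rule set_integrable_subset[OF g2]) (use L in auto)
  have "c\<^sup>2 \<le> (u x0)\<^sup>2"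
    using x0(2) c power_mono[of c "\<bar>u x0\<bar>" 2] by simp
  also have "\<dots> \<le> x0 * (LINT t:{0..x0}|lborel. (g t)\<^sup>2)"
    using set_integral_Icc_square_le[OF gi0 g20 \<open>x0 > 0\<close>] unfolding ux0 by simp
  also have "\<dots> \<le> 1 * (LINT t:{0..x0}|lborel. (g t)\<^sup>2)"
  proof (rule mult_right_mono)
    show "x0 \<le> 1" using x0 by simp
    show "0 \<le> (LINT t:{0..x0}|lborel. (g t)\<^sup>2)"
      by (rule set_integral_nonneg) simp
  qed
  also have "\<dots> \<le> (LINT t:{0..1}|lborel. (g t)\<^sup>2)"
    using set_integral_mono_subset[OF g21, of "{0..x0}"] x0 by simp
  finally show ?thesis .
qed


text \<open>Either \<open>u\<close> stays in \<open>(-c, c)\<close> on \<open>[0, 1]\<close>, where \<open>G(u) - G(m) \<ge> \<gamma>\<close>, or it reaches \<open>\<plusminus>c\<close> there,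
  which costs Dirichlet energy by Cauchy--Schwarz.\<close>
lemma excess_energy_lower_bound_on_01:
  fixes a b G g u :: "real \<Rightarrow> real"
  assumes gi: "set_integrable lborel {-L..L} g" and g2: "set_integrable lborel {-L..L} (\<lambda>x. (g x)\<^sup>2)"
    and u: "\<forall>x\<in>{-L..L}. u x = u (-L) + (LBINT t=-L..x. g t)" and L: "L \<ge> 1" and u0: "u 0 = 0"
    and apos: "\<And>x. a x > 0" and bpos: "\<And>x. b x > 0" and Gm: "\<And>s. G s \<ge> G m"
    and \<alpha>: "\<alpha> > 0" "\<And>x. x \<in> {0..1} \<Longrightarrow> \<alpha> \<le> a x" and \<beta>: "\<beta> > 0" "\<And>x. x \<in> {0..1} \<Longrightarrow> \<beta> \<le> b x"
    and \<gamma>: "\<gamma> > 0" "\<And>s. s \<in> {-c..c} \<Longrightarrow> \<gamma> \<le> G s - G m" and c: "c > 0"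
    and Di: "set_integrable lborel {0..1} (\<lambda>x. (1/2) * (g x)\<^sup>2 * a x + (G (u x) - G m) * b x)"
  shows "min (\<gamma> * \<beta>) (\<alpha> * c\<^sup>2 / 2) \<le> (LINT x:{0..1}|lborel. (1/2) * (g x)\<^sup>2 * a x + (G (u x) - G m) * b x)"
    (is "_ \<le> (LINT x:{0..1}|lborel. ?D x)")
proof (cases "\<forall>x\<in>{0..1}. \<bar>u x\<bar> < c")
  case True
  have "(LINT (x::real):{0..1}|lborel. \<gamma> * \<beta>) \<le> (LINT x:{0..1}|lborel. ?D x)"
  proof (rule set_integral_mono[OF _ Di])
    show "set_integrable lborel {0..1} (\<lambda>x::real. \<gamma> * \<beta>)"
      by (rule borel_integrable_atLeastAtMost') simp
    fix x :: real assume x: "x \<in> {0..1}"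
    then have "u x \<in> {-c..c}" using True by fastforce
    then have "\<gamma> \<le> G (u x) - G m" using \<gamma>(2) by blast
    then have "\<gamma> * \<beta> \<le> (G (u x) - G m) * b x"
      using \<beta> x \<gamma> by (intro mult_mono) auto
    then show "\<gamma> * \<beta> \<le> ?D x" using apos[of x] by (simp add: add_increasing)
  qed
  then show ?thesis by (simp add: set_integral_const)
next
  case False
  then obtain x0 where x0: "x0 \<in> {0..1}" "c \<le> \<bar>u x0\<bar>" by auto
  have g21: "set_integrable lborel {0..1} (\<lambda>t. (g t)\<^sup>2)"
    by (rule set_integrable_subset[OF g2]) (use L in auto)
  have "(LINT x:{0..1}|lborel. \<alpha>/2 * (g x)\<^sup>2) \<le> (LINT x:{0..1}|lborel. ?D x)"
  proof (rule set_integral_mono[OF _ Di])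
    show "set_integrable lborel {0..1} (\<lambda>x. \<alpha>/2 * (g x)\<^sup>2)" using g21 by simp
    fix x :: real assume x: "x \<in> {0..1}"
    have "(g x)\<^sup>2 * \<alpha> \<le> (g x)\<^sup>2 * a x" using \<alpha>(2)[OF x] by (intro mult_left_mono) auto
    moreover have "0 \<le> (G (u x) - G m) * b x" using Gm[of "u x"] bpos[of x] by simp
    ultimately show "\<alpha>/2 * (g x)\<^sup>2 \<le> ?D x" by (simp add: mult.commute)
  qed
  moreover have "\<alpha>/2 * c\<^sup>2 \<le> \<alpha>/2 * (LINT x:{0..1}|lborel. (g x)\<^sup>2)"
    using sq_le_set_integral_sq_if_far_from_zero[OF gi g2 u L u0 x0 c] \<alpha>(1)
    by (intro mult_left_mono) auto
  ultimately show ?thesis by simp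
qed

lemma energy_lower_bound_if_vanishes_at_0:
  fixes a b G :: "real \<Rightarrow> real" and m :: real
  assumes ca: "continuous_on UNIV a" and cb: "continuous_on UNIV b" and cG: "continuous_on UNIV G"
    and apos: "\<And>x. a x > 0" and bpos: "\<And>x. b x > 0" and m: "m > 0"
    and Gm: "\<And>s. G s \<ge> G m" and Gs: "\<And>s. s \<in> {-m<..<m} \<Longrightarrow> G s > G m"
  obtains \<delta> where "\<delta> > 0"
    and "\<And>L u. L \<ge> 1 \<Longrightarrow> H1 L u \<Longrightarrow> u 0 = 0 \<Longrightarrow>
           G m * (LINT x:{-L..L}|lborel. b x) + \<delta> \<le> energy a b G L u"
proof -
  obtain \<alpha> where \<alpha>: "\<alpha> > 0" "\<And>x. x \<in> {0..1} \<Longrightarrow> \<alpha> \<le> a x"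
    using continuous_on_compact_pos_lower_bound[of "{0..1}" a, OF continuous_on_subset[OF ca] compact_Icc _ apos]
    by auto
  obtain \<beta> where \<beta>: "\<beta> > 0" "\<And>x. x \<in> {0..1} \<Longrightarrow> \<beta> \<le> b x"
    using continuous_on_compact_pos_lower_bound[of "{0..1}" b, OF continuous_on_subset[OF cb] compact_Icc _ bpos]
    by auto
  define c where "c = m/2"
  have c: "c > 0" "c < m" using m unfolding c_def by auto
  have "continuous_on {-c..c} (\<lambda>s. G s - G m)"
    by (intro continuous_intros continuous_on_subset[OF cG]) auto
  moreover have "G s - G m > 0" if "s \<in> {-c..c}" for s using Gs c that by auto
  ultimately obtain \<gamma> where \<gamma>: "\<gamma> > 0" "\<And>s. s \<in> {-c..c} \<Longrightarrow> \<gamma> \<le> G s - G m"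
    using continuous_on_compact_pos_lower_bound[of "{-c..c}" "\<lambda>s. G s - G m"] c by auto
  define \<delta> where "\<delta> = min (\<gamma>*\<beta>) (\<alpha>*c\<^sup>2/2)"
  have "G m * (LINT x:{-L..L}|lborel. b x) + \<delta> \<le> energy a b G L u"
    if L: "L \<ge> 1" and "H1 L u" and u0: "u 0 = 0" for L u
  proof -
    from \<open>H1 L u\<close> obtain g where gm: "g \<in> borel_measurable lborel"
      and gi: "set_integrable lborel {-L..L} g" and g2: "set_integrable lborel {-L..L} (\<lambda>x. (g x)\<^sup>2)"
      and u: "\<forall>x\<in>{-L..L}. u x = u (-L) + (LBINT t=-L..x. g t)"
      unfolding H1_def by blast
    define E where "E x = (1/2) * (g x)\<^sup>2 * a x + G (u x) * b x" for x
    define D where "D x = (1/2) * (g x)\<^sup>2 * a x + (G (u x) - G m) * b x" for x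
    have Ei: "set_integrable lborel {-L..L} E" unfolding E_def
      using set_integrable_energy_density[OF ca cb cG gm g2 continuous_on_indefinite_set_integral[OF gi u]] .
    have bi: "set_integrable lborel {-L..L} b"
      by (rule borel_integrable_atLeastAtMost') (rule continuous_on_subset[OF cb], auto)
    have DE: "D x = E x - G m * b x" for x unfolding D_def E_def by (simp add: algebra_simps)
    have Di: "set_integrable lborel {-L..L} D"
      unfolding DE using Ei bi by (intro set_integral_diff(1)) auto
    have "energy a b G L u = G m * (LINT x:{-L..L}|lborel. b x) + (LINT x:{-L..L}|lborel. D x)"
      using energy_eq_weak_derivative[OF ca cb cG _ gm gi u] L Ei bi
      unfolding DE E_def[symmetric] by (simp add: set_integral_diff(2))
    moreover have "0 \<le> D x" for x
      unfolding D_def using apos[of x] bpos[of x] Gm[of "u x"] by (intro add_nonneg_nonneg) auto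
    then have "(LINT x:{0..1}|lborel. D x) \<le> (LINT x:{-L..L}|lborel. D x)"
      using L by (intro set_integral_mono_subset[OF Di]) auto
    moreover have "set_integrable lborel {0..1} D"
      by (rule set_integrable_subset[OF Di]) (use L in auto)
    then have "\<delta> \<le> (LINT x:{0..1}|lborel. D x)"
      using excess_energy_lower_bound_on_01[where a = a and b = b and G = G and m = m, OF gi g2 u L u0 apos bpos Gm
          \<alpha> \<beta> \<gamma> c(1)]
      unfolding \<delta>_def D_def by blast
    ultimately show ?thesis by simp
  qed
  moreover have "\<delta> > 0" unfolding \<delta>_def using \<alpha> \<beta> \<gamma> c by auto
  ultimately show ?thesis using that by blast
qed

section \<open>The transition layer\<close>

lemma set_integral_indicator_subset:
  fixes k :: "real \<Rightarrow> real"
  assumes sub: "B \<subseteq> A" and ki: "set_integrable lborel B k"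
  shows "set_integrable lborel A (\<lambda>x. indicator B x * k x)"
    and "(LINT x:A|lborel. indicator B x * k x) = (LINT x:B|lborel. k x)"
proof -
  have eq: "(\<lambda>x. indicator A x *\<^sub>R (indicator B x * k x)) = (\<lambda>x. indicator B x *\<^sub>R k x)"
    using sub by (auto simp: fun_eq_iff split: split_indicator)
  show "set_integrable lborel A (\<lambda>x. indicator B x * k x)"
    using ki unfolding set_integrable_def eq .
  show "(LINT x:A|lborel. indicator B x * k x) = (LINT x:B|lborel. k x)"
    unfolding set_lebesgue_integral_def eq ..
qed

lemma set_integral_Icc_pos:
  fixes f :: "real \<Rightarrow> real"
  assumes f: "continuous_on {p..q} f" and pos: "\<And>x. x \<in> {p..q} \<Longrightarrow> f x > 0" and pq: "p < q"
  shows "(LINT x:{p..q}|lborel. f x) > 0"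
proof -
  obtain \<kappa> where \<kappa>: "\<kappa> > 0" "\<And>x. x \<in> {p..q} \<Longrightarrow> \<kappa> \<le> f x"
    using continuous_on_compact_pos_lower_bound[of "{p..q}" f, OF f compact_Icc _ pos] pq by auto
  have "(q - p) * \<kappa> = (LINT x:{p..q}|lborel. \<kappa>)" using pq by (simp add: set_integral_const)
  also have "\<dots> \<le> (LINT x:{p..q}|lborel. f x)"
    using \<kappa> by (intro set_integral_mono borel_integrable_atLeastAtMost' f) auto
  finally show ?thesis using pq \<kappa> by (smt (verit) mult_pos_pos)
qed

text \<open>The transition layer from \<open>-m\<close> to \<open>m\<close> across \<open>[p, q]\<close> is affine in the variable \<open>\<integral>\<^sub>p\<^sup>x 1/a\<close>;
  this minimises \<open>\<integral> a (v')\<^sup>2\<close> among such transitions, with value \<open>4 m\<^sup>2 / \<integral>\<^sub>p\<^sup>q 1/a\<close>.\<close>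
definition layer_slope :: "(real \<Rightarrow> real) \<Rightarrow> real \<Rightarrow> real \<Rightarrow> real \<Rightarrow> real \<Rightarrow> real" where
  "layer_slope a m p q x = indicator {p..q} x * (2 * m / ((LINT s:{p..q}|lborel. 1 / a s) * a x))"

definition transition_layer :: "(real \<Rightarrow> real) \<Rightarrow> real \<Rightarrow> real \<Rightarrow> real \<Rightarrow> real \<Rightarrow> real \<Rightarrow> real" where
  "transition_layer a m L p q x = -m + (LBINT t=-L..x. layer_slope a m p q t)"

context
  fixes a :: "real \<Rightarrow> real" and m L p q :: real
  assumes ca: "continuous_on UNIV a" and apos: "\<And>x. a x > 0" and m: "m > 0"
    and pq: "-L \<le> p" "p < q" "q \<le> L"
begin

private abbreviation "I \<equiv> LINT x:{p..q}|lborel. 1 / a x"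
private abbreviation "h \<equiv> layer_slope a m p q"
private abbreviation "v \<equiv> transition_layer a m L p q"

private lemma inverse_a_continuous: "continuous_on UNIV (\<lambda>x. 1 / a x)"
  using ca apos by (intro continuous_intros) (auto simp: less_le)

private lemma I_pos: "I > 0"
  using apos pq by (intro set_integral_Icc_pos continuous_on_subset[OF inverse_a_continuous]) auto

lemma layer_slope_nonneg: "0 \<le> layer_slope a m p q x"
  using apos[of x] I_pos m by (simp add: layer_slope_def)

lemma layer_slope_eq: "x \<in> {p..q} \<Longrightarrow> layer_slope a m p q x = 2 * m / (I * a x)"
  by (simp add: layer_slope_def)

lemma
  shows borel_measurable_layer_slope: "layer_slope a m p q \<in> borel_measurable lborel"
    and set_integrable_layer_slope: "set_integrable lborel {-L..L} (layer_slope a m p q)"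
    and set_integrable_layer_slope_sq: "set_integrable lborel {-L..L} (\<lambda>x. (layer_slope a m p q x)\<^sup>2)"
    and set_integral_layer_slope: "(LINT x:{-L..L}|lborel. layer_slope a m p q x) = 2 * m"
proof -
  define k where "k x = 2 * m / (I * a x)" for x
  have ck: "continuous_on UNIV k"
    unfolding k_def using ca apos I_pos by (intro continuous_intros) (auto simp: less_le)
  have h_eq: "h = (\<lambda>x. indicator {p..q} x * k x)" by (simp add: layer_slope_def k_def fun_eq_iff)
  have sub: "{p..q} \<subseteq> {-L..L}" using pq by auto
  have ki: "set_integrable lborel {p..q} k"
    by (rule borel_integrable_atLeastAtMost') (rule continuous_on_subset[OF ck], auto)
  show "h \<in> borel_measurable lborel" unfolding h_eq using borel_measurable_continuous_onI[OF ck] by simp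
  show "set_integrable lborel {-L..L} h" unfolding h_eq by (rule set_integral_indicator_subset(1)[OF sub ki])
  have "set_integrable lborel {p..q} (\<lambda>x. (k x)\<^sup>2)"
    by (rule borel_integrable_atLeastAtMost') (intro continuous_intros continuous_on_subset[OF ck], auto)
  moreover have "(h x)\<^sup>2 = indicator {p..q} x * (k x)\<^sup>2" for x
    unfolding h_eq by (simp split: split_indicator)
  ultimately show "set_integrable lborel {-L..L} (\<lambda>x. (h x)\<^sup>2)"
    using set_integral_indicator_subset(1)[OF sub] by presburger
  have "(LINT x:{p..q}|lborel. k x) = (LINT x:{p..q}|lborel. (2*m/I) * (1/a x))"
    by (rule set_lebesgue_integral_cong) (auto simp: k_def)
  also have "\<dots> = 2 * m" using I_pos by (subst set_integral_mult_right) simp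
  finally show "(LINT x:{-L..L}|lborel. h x) = 2 * m"
    unfolding h_eq set_integral_indicator_subset(2)[OF sub ki] .
qed

lemma transition_layer_repr: "\<forall>x\<in>{-L..L}. v x = v (-L) + (LBINT t=-L..x. h t)"
  by (simp add: transition_layer_def)

lemma H1m_transition_layer: "H1m m L v"
proof -
  have "v (-L) = -m" by (simp add: transition_layer_def)
  moreover have "v L = m"
    using pq set_integral_layer_slope by (simp add: transition_layer_def interval_integral_Icc)
  ultimately show ?thesis unfolding H1m_def H1_def
    using borel_measurable_layer_slope set_integrable_layer_slope set_integrable_layer_slope_sq
      transition_layer_repr by blast
qed

lemma transition_layer_increment:
  "-L \<le> x \<Longrightarrow> x \<le> y \<Longrightarrow> y \<le> L \<Longrightarrow> v y - v x = (LINT t:{x..y}|lborel. h t)"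
  by (rule indefinite_integral_diff[OF set_integrable_layer_slope transition_layer_repr])

lemma transition_layer_range:
  assumes "x \<in> {-L..L}"
  shows "v x \<in> {-m..m}"
proof -
  have "0 \<le> (LINT t:{-L..x}|lborel. h t)" "0 \<le> (LINT t:{x..L}|lborel. h t)"
    using layer_slope_nonneg by (auto intro: set_integral_nonneg)
  with assms H1m_transition_layer show ?thesis
    using transition_layer_increment[of "-L" x] transition_layer_increment[of x L]
    by (auto simp: H1m_def)
qed


lemma transition_layer_outside:
  assumes x: "x \<in> {-L..L}" "x \<notin> {p..q}"
  shows "\<bar>v x\<bar> = m"
proof -
  have zero: "(LINT t:{y..z}|lborel. h t) = 0" if "{y..z} \<inter> {p..q} = {}" for y z
  proof -
    have "(LINT t:{y..z}|lborel. h t) = (LINT t:{y..z}|lborel. 0)"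
      by (rule set_lebesgue_integral_cong) (use that in \<open>auto simp: layer_slope_def\<close>)
    then show ?thesis by simp
  qed
  have "v (-L) = -m" "v L = m" using H1m_transition_layer by (auto simp: H1m_def)
  moreover have "v x - v (-L) = 0" if "x < p"
    using transition_layer_increment[of "-L" x] zero[of "-L" x] x that by auto
  moreover have "v L - v x = 0" if "x > q"
    using transition_layer_increment[of x L] zero[of x L] x that by auto
  ultimately show ?thesis using x m by force
qed

lemma energy_density_transition_layer_le:
  fixes b G :: "real \<Rightarrow> real"
  assumes bpos: "\<And>x. b x > 0" and Geven: "\<And>x. G (-x) = G x" and M: "\<And>s. s \<in> {-m..m} \<Longrightarrow> G s \<le> M"
    and x: "x \<in> {-L..L}"
  shows "(1/2) * (h x)\<^sup>2 * a x + G (v x) * b x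
    \<le> G m * b x + indicator {p..q} x * (2 * m\<^sup>2 / I\<^sup>2 * (1 / a x) + (M - G m) * b x)"
proof (cases "x \<in> {p..q}")
  case True
  have "(1/2) * (h x)\<^sup>2 * a x = 2 * m\<^sup>2 / I\<^sup>2 * (1 / a x)"
  proof -
    have "(1/2) * (2 * m / (J * A))\<^sup>2 * A = 2 * m\<^sup>2 / J\<^sup>2 * (1 / A)" if "A > 0" "J > 0" for A J
      using that by (simp add: field_simps power2_eq_square)
    from this[OF apos[of x] I_pos] show ?thesis by (simp only: layer_slope_eq[OF True])
  qed
  moreover have "G (v x) * b x \<le> M * b x"
    using M[OF transition_layer_range[OF x]] bpos[of x] by (intro mult_right_mono) auto
  ultimately show ?thesis using True by (simp add: algebra_simps)
next
  case False
  then have "v x = m \<or> v x = -m" using transition_layer_outside[OF x] by linarith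
  then have "G (v x) = G m" using Geven[of m] by auto
  with False show ?thesis by (simp add: layer_slope_def)
qed

lemma energy_transition_layer_le:
  fixes b G :: "real \<Rightarrow> real"
  assumes cb: "continuous_on UNIV b" and cG: "continuous_on UNIV G" and bpos: "\<And>x. b x > 0"
    and Geven: "\<And>x. G (-x) = G x" and M: "\<And>s. s \<in> {-m..m} \<Longrightarrow> G s \<le> M"
  shows "energy a b G L v \<le> G m * (LINT x:{-L..L}|lborel. b x) + 2 * m\<^sup>2 / I
           + (M - G m) * (LINT x:{p..q}|lborel. b x)"
proof -
  have L: "L > 0" using pq by linarith
  define k where "k x = 2 * m\<^sup>2 / I\<^sup>2 * (1 / a x) + (M - G m) * b x" for x
  have sub: "{p..q} \<subseteq> {-L..L}" using pq by auto
  have int_b: "set_integrable lborel S b" if "S = {-L..L} \<or> S = {p..q}" for S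
    using that by (auto intro!: borel_integrable_atLeastAtMost' continuous_on_subset[OF cb])
  have int_inv_a: "set_integrable lborel {p..q} (\<lambda>x. 1 / a x)"
    by (rule borel_integrable_atLeastAtMost') (rule continuous_on_subset[OF inverse_a_continuous], auto)
  have ki: "set_integrable lborel {p..q} k"
    unfolding k_def using int_inv_a int_b by (intro set_integral_add(1) set_integrable_mult_right) auto
  have "energy a b G L v = (LINT x:{-L..L}|lborel. (1/2) * (h x)\<^sup>2 * a x + G (v x) * b x)"
    using energy_eq_weak_derivative[OF ca cb cG L borel_measurable_layer_slope
        set_integrable_layer_slope transition_layer_repr] .
  also have "\<dots> \<le> (LINT x:{-L..L}|lborel. G m * b x + indicator {p..q} x * k x)"
  proof (rule set_integral_mono)
    show "set_integrable lborel {-L..L} (\<lambda>x. (1/2) * (h x)\<^sup>2 * a x + G (v x) * b x)"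
      using set_integrable_energy_density[OF ca cb cG borel_measurable_layer_slope
          set_integrable_layer_slope_sq continuous_on_indefinite_set_integral[OF
          set_integrable_layer_slope transition_layer_repr]] .
    show "set_integrable lborel {-L..L} (\<lambda>x. G m * b x + indicator {p..q} x * k x)"
      using int_b set_integral_indicator_subset(1)[OF sub ki] by (intro set_integral_add(1)) auto
    show "(1/2) * (h x)\<^sup>2 * a x + G (v x) * b x \<le> G m * b x + indicator {p..q} x * k x"
      if "x \<in> {-L..L}" for x
      unfolding k_def by (rule energy_density_transition_layer_le[where b = b and G = G, OF bpos Geven M that])
  qed
  also have "\<dots> = G m * (LINT x:{-L..L}|lborel. b x) + (LINT x:{p..q}|lborel. k x)"
    using int_b set_integral_indicator_subset[OF sub ki] by (subst set_integral_add(2)) auto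
  also have "(LINT x:{p..q}|lborel. k x) = 2 * m\<^sup>2 / I\<^sup>2 * I + (M - G m) * (LINT x:{p..q}|lborel. b x)"
  proof -
    have "(LINT x:{p..q}|lborel. k x) = (LINT x:{p..q}|lborel. 2 * m\<^sup>2 / I\<^sup>2 * (1 / a x))
        + (LINT x:{p..q}|lborel. (M - G m) * b x)"
      unfolding k_def using int_inv_a int_b by (intro set_integral_add(2) set_integrable_mult_right) auto
    also have "(LINT x:{p..q}|lborel. 2 * m\<^sup>2 / I\<^sup>2 * (1 / a x)) = 2 * m\<^sup>2 / I\<^sup>2 * I"
      by (rule set_integral_mult_right)
    also have "(LINT x:{p..q}|lborel. (M - G m) * b x) = (M - G m) * (LINT x:{p..q}|lborel. b x)"
      by (rule set_integral_mult_right)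
    finally show ?thesis .
  qed
  also have "2 * m\<^sup>2 / I\<^sup>2 * I = 2 * m\<^sup>2 / I" using I_pos by (simp add: power2_eq_square)
  finally show ?thesis by (simp add: add.assoc)
qed

end


section \<open>Choice of the transition interval\<close>

lemma bounded_interval_integral_Icc:
  fixes J :: "real set" and f :: "real \<Rightarrow> real"
  assumes iJ: "is_interval J" and bJ: "bounded J" and nz: "(LINT x:J|lborel. f x) \<noteq> 0"
  obtains p q where "p < q" "\<And>g :: real \<Rightarrow> real. (LINT x:J|lborel. g x) = (LINT x:{p..q}|lborel. g x)"
proof -
  have ne: "J \<noteq> {}" using nz by (auto simp: set_lebesgue_integral_def)
  have ba: "bdd_above J" "bdd_below J" using bJ by (auto intro: bounded_imp_bdd_above bounded_imp_bdd_below)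
  have "(J - {Inf J..Sup J}) \<union> ({Inf J..Sup J} - J) \<subseteq> {Inf J, Sup J}"
  proof
    fix x assume x: "x \<in> (J - {Inf J..Sup J}) \<union> ({Inf J..Sup J} - J)"
    have "x \<in> {Inf J..Sup J}" "x \<notin> J" using x ba by (auto intro: cInf_lower cSup_upper)
    moreover have "x \<in> J" if "Inf J < x" "x < Sup J"
    proof -
      have "\<exists>x1\<in>J. x1 < x" "\<exists>x2\<in>J. x < x2"
        using cInf_less_iff[OF ne ba(2), of x] less_cSup_iff[OF ne ba(1), of x] that by blast+
      then show ?thesis using iJ unfolding is_interval_1 by (meson less_imp_le)
    qed
    ultimately have "Inf J \<le> x" "x \<le> Sup J" "\<not> (Inf J < x \<and> x < Sup J)" by auto
    then show "x \<in> {Inf J, Sup J}" by auto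
  qed
  then have eq: "(LINT x:J|lborel. g x) = (LINT x:{Inf J..Sup J}|lborel. g x)" for g :: "real \<Rightarrow> real"
    by (intro set_integral_discrete_difference[where X="{Inf J, Sup J}"]) auto
  have "Inf J < Sup J"
  proof (rule ccontr)
    assume "\<not> Inf J < Sup J"
    then have "(LINT x:{Inf J..Sup J}|lborel. f x) = (LINT x:{}|lborel. f x)"
      by (intro set_integral_discrete_difference[where X="{Inf J}"]) auto
    with nz eq show False by (simp add: set_lebesgue_integral_def)
  qed
  with eq that show ?thesis by blast
qed

lemma exists_Icc_small_transition_cost:
  fixes a b :: "real \<Rightarrow> real" and J :: "nat \<Rightarrow> real set"
  assumes iJ: "\<And>n. is_interval (J n)" and bJ: "\<And>n. bounded (J n)"
    and IJ: "filterlim (\<lambda>n. LINT x:J n|lborel. 1 / a x) at_top sequentially"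
    and BJ: "(\<lambda>n. LINT x:J n|lborel. b x) \<longlonglongrightarrow> 0"
    and \<epsilon>: "\<epsilon> > 0"
  obtains p q where "p < q"
    "2 * m\<^sup>2 / (LINT x:{p..q}|lborel. 1 / a x) + C * (LINT x:{p..q}|lborel. b x) < \<epsilon>"
proof -
  have "eventually (\<lambda>n. 4 * m\<^sup>2 / \<epsilon> + 1 \<le> (LINT x:J n|lborel. 1 / a x)) sequentially"
    using IJ unfolding filterlim_at_top by blast
  moreover have "(\<lambda>n. C * (LINT x:J n|lborel. b x)) \<longlonglongrightarrow> C * 0"
    by (intro tendsto_intros BJ)
  then have "eventually (\<lambda>n. C * (LINT x:J n|lborel. b x) < \<epsilon>/2) sequentially"
    using \<epsilon> by (intro order_tendstoD(2)) auto
  ultimately have "eventually (\<lambda>n. 4 * m\<^sup>2 / \<epsilon> + 1 \<le> (LINT x:J n|lborel. 1 / a x)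
      \<and> C * (LINT x:J n|lborel. b x) < \<epsilon>/2) sequentially"
    by (rule eventually_conj)
  then obtain n where n1: "4 * m\<^sup>2 / \<epsilon> + 1 \<le> (LINT x:J n|lborel. 1 / a x)"
    and n2: "C * (LINT x:J n|lborel. b x) < \<epsilon>/2"
    unfolding eventually_sequentially by blast
  have "0 \<le> 4 * m\<^sup>2 / \<epsilon>" using \<epsilon> by simp
  with n1 have "(LINT x:J n|lborel. 1 / a x) \<noteq> 0" by linarith
  then obtain p q where "p < q"
    and pq: "\<And>g :: real \<Rightarrow> real. (LINT x:J n|lborel. g x) = (LINT x:{p..q}|lborel. g x)"
    using bounded_interval_integral_Icc[OF iJ bJ] by blast
  define I where "I = (LINT x:{p..q}|lborel. 1 / a x)"
  have "4 * m\<^sup>2 / \<epsilon> < I" using n1 unfolding pq I_def by linarith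
  then have "4 * m\<^sup>2 < I * \<epsilon>" "I > 0"
    using \<epsilon> \<open>0 \<le> 4 * m\<^sup>2 / \<epsilon>\<close> by (simp add: pos_divide_less_eq, linarith)
  then have "2 * m\<^sup>2 / I < \<epsilon>/2" by (simp add: pos_divide_less_eq mult.commute)
  moreover have "C * (LINT x:{p..q}|lborel. b x) < \<epsilon>/2" using n2 unfolding pq .
  ultimately show ?thesis using that[OF \<open>p < q\<close>] unfolding I_def by linarith
qed


lemma odd_on_imp_zero:
  assumes "odd_on L u" "L \<ge> 0"
  shows "u 0 = 0"
proof -
  have "u (-0) = - u 0" using assms unfolding odd_on_def by (metis atLeastAtMost_iff neg_le_0_iff_le)
  then show ?thesis by simp
qed

theorem proposition1p6:
  fixes a b G :: "real \<Rightarrow> real" and m :: real and J :: "nat \<Rightarrow> real set"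
  assumes "continuous_on UNIV a" "continuous_on UNIV b" "continuous_on UNIV G"
    and "\<And>x. a (-x) = a x" "\<And>x. b (-x) = b x" "\<And>x. G (-x) = G x"
    and "\<And>x. a x > 0" "\<And>x. b x > 0"
    and "m > 0"
    and "\<And>s. G s \<ge> G m"
    and "\<And>s. s \<in> {-m<..<m} \<Longrightarrow> G s > G m"
    and "\<And>n. is_interval (J n)" "\<And>n. bounded (J n)"
    and "filterlim (\<lambda>n. LINT x:J n|lborel. 1 / a x) at_top sequentially"
    and "(\<lambda>n. LINT x:J n|lborel. b x) \<longlonglongrightarrow> 0"
  shows "\<exists>L0>0. \<forall>L>L0. \<not> (\<exists>u. is_minimizer a b G m L u \<and> odd_on L u)"
proof -
  obtain \<delta> where "\<delta> > 0" and lower: "\<And>L u. L \<ge> 1 \<Longrightarrow> H1 L u \<Longrightarrow> u 0 = 0 \<Longrightarrow>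
      G m * (LINT x:{-L..L}|lborel. b x) + \<delta> \<le> energy a b G L u"
    using energy_lower_bound_if_vanishes_at_0[OF assms(1-3,7-11)] by blast
  have "bounded (G ` {-m..m})"
    by (intro compact_imp_bounded compact_continuous_image continuous_on_subset[OF assms(3)]) auto
  then obtain M where "\<And>s. s \<in> {-m..m} \<Longrightarrow> \<bar>G s\<bar> \<le> M" unfolding bounded_real by blast
  then have M: "\<And>s. s \<in> {-m..m} \<Longrightarrow> G s \<le> M" using abs_le_D1 by blast
  obtain p q where "p < q" and cost: "2 * m\<^sup>2 / (LINT x:{p..q}|lborel. 1 / a x)
      + (M - G m) * (LINT x:{p..q}|lborel. b x) < \<delta>"
    using exists_Icc_small_transition_cost[OF assms(12-15) \<open>\<delta> > 0\<close>] by blast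
  show ?thesis
  proof (intro exI[of _ "max \<bar>p\<bar> \<bar>q\<bar> + 1"] conjI allI impI notI)
    fix L assume L: "L > max \<bar>p\<bar> \<bar>q\<bar> + 1"
    then have pq: "-L \<le> p" "p < q" "q \<le> L" using \<open>p < q\<close> by auto
    assume "\<exists>u. is_minimizer a b G m L u \<and> odd_on L u"
    then obtain u where u: "is_minimizer a b G m L u" and "odd_on L u" by blast
    then have "G m * (LINT x:{-L..L}|lborel. b x) + \<delta> \<le> energy a b G L u"
      using L by (intro lower) (auto simp: is_minimizer_def H1m_def odd_on_imp_zero)
    also have "\<dots> \<le> energy a b G L (transition_layer a m L p q)"
      using u H1m_transition_layer[OF assms(1,7,9) pq] by (simp add: is_minimizer_def)
    also have "\<dots> \<le> G m * (LINT x:{-L..L}|lborel. b x) + 2 * m\<^sup>2 / (LINT x:{p..q}|lborel. 1 / a x)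
        + (M - G m) * (LINT x:{p..q}|lborel. b x)"
      by (rule energy_transition_layer_le[OF assms(1,7,9) pq assms(2,3,8,6) M])
    finally show False using cost by linarith
  qed simp
qed

end
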